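(* Every finite-dimensional Yetter-Drinfeld module over $H=B(n,w,\gamma)$ contains a standard element.
   Context: $\Bbbk$ is an algebraically closed field of characteristic $0$; $n,w$ positive integers, $\gamma$ a primitive $n$-th root of unity. $H=B(n,w,\gamma)$ is the Hopf algebra generated by $x^{\pm1},g,y$ with relations $xx^{-1}=x^{-1}x=1$, $xg=gx$, $xy=yx$, $yg=\gamma gy$, $y^n=1-x^w=1-g^n$, with $\Delta(x)=x\otimes x$, $\Delta(g)=g\otimes g$, $\Delta(y)=y\otimes g+1\otimes y$, $\varepsilon(x)=\varepsilon(g)=1$, $\varepsilon(y)=0$, $S(x)=x^{-1}$, $S(g)=g^{-1}$, $S(y)=-yg^{-1}$; its group of group-likes is $G(H)=\{g^jx^k\}$. A (left-left) Yetter-Drinfeld module is a left $H$-module, left $H$-comodule $(V,\cdot,\delta)$ with $\delta(h\cdot v)=h_{(1)}v_{(-1)}S(h_{(3)})\otimes h_{(2)}\cdot v_{(0)}$. A nonzero $v\in V$ is a standard element (of type $(\alpha,\beta,h)$) if there are $h\in G(H)$ and $\alpha,\beta\in\Bbbk^*$ with $x\cdot v=\alpha v$, $g\cdot v=\beta v$, $\delta(v)=h\otimes v$. *)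

theory Defs
  imports "HOL-Analysis.Analysis" "HOL-Computational_Algebra.Polynomial"
begin

text \<open>Basis of H: the monomials g^j x^k y^l with j < n, k an integer, l < n,
  indexed by the triple (j,k,l). Elements of H are finitely supported
  coefficient functions idx => 'k; elements of H (x) H and H (x) H (x) H are
  coefficient functions on pairs / triples of indices.\<close>

type_synonym idx = "nat \<times> int \<times> nat"

definition supp :: "('a \<Rightarrow> 'b::zero) \<Rightarrow> 'a set" where
  "supp f = {b. f b \<noteq> 0}"

definition bas :: "'a \<Rightarrow> 'a \<Rightarrow> 'k::zero_neq_one" where
  "bas b = (\<lambda>c. if c = b then 1 else 0)"

text \<open>Normal form of the monomial g^a x^b y^c (arbitrary a, c), using
  g^n = x^w (central) and y^n = 1 - x^w.\<close>
definition nf :: "nat \<Rightarrow> nat \<Rightarrow> nat \<Rightarrow> int \<Rightarrow> nat \<Rightarrow> idx \<Rightarrow> 'k::comm_ring_1" where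
  "nf n w a b c = (\<lambda>t. \<Sum>i\<in>{0..c div n}.
      of_nat ((c div n) choose i) * (-1) ^ i *
      bas (a mod n, b + int w * int (a div n) + int w * int i, c mod n) t)"

text \<open>Product of basis monomials: (g^a x^b y^c)(g^d x^e y^f) = gamma^(cd) g^(a+d) x^(b+e) y^(c+f).\<close>
definition bmul :: "nat \<Rightarrow> nat \<Rightarrow> 'k::comm_ring_1 \<Rightarrow> idx \<Rightarrow> idx \<Rightarrow> idx \<Rightarrow> 'k" where
  "bmul n w \<gamma> p q = (case p of (a, b, c) \<Rightarrow> case q of (d, e, f) \<Rightarrow>
      (\<lambda>t. \<gamma> ^ (c * d) * nf n w (a + d) (b + e) (c + f) t))"

definition hmul :: "nat \<Rightarrow> nat \<Rightarrow> 'k::comm_ring_1 \<Rightarrow> (idx \<Rightarrow> 'k) \<Rightarrow> (idx \<Rightarrow> 'k) \<Rightarrow> idx \<Rightarrow> 'k" where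
  "hmul n w \<gamma> f h = (\<lambda>t. \<Sum>p\<in>supp f. \<Sum>q\<in>supp h. f p * h q * bmul n w \<gamma> p q t)"

primrec hpow :: "nat \<Rightarrow> nat \<Rightarrow> 'k::comm_ring_1 \<Rightarrow> (idx \<Rightarrow> 'k) \<Rightarrow> nat \<Rightarrow> idx \<Rightarrow> 'k" where
  "hpow n w \<gamma> f 0 = nf n w 0 0 0"
| "hpow n w \<gamma> f (Suc m) = hmul n w \<gamma> (hpow n w \<gamma> f m) f"

definition tmul :: "nat \<Rightarrow> nat \<Rightarrow> 'k::comm_ring_1 \<Rightarrow> (idx \<times> idx \<Rightarrow> 'k) \<Rightarrow> (idx \<times> idx \<Rightarrow> 'k)
    \<Rightarrow> idx \<times> idx \<Rightarrow> 'k" where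
  "tmul n w \<gamma> F K = (\<lambda>(t1, t2). \<Sum>p\<in>supp F. \<Sum>q\<in>supp K.
      F p * K q * bmul n w \<gamma> (fst p) (fst q) t1 * bmul n w \<gamma> (snd p) (snd q) t2)"

definition ptens :: "(idx \<Rightarrow> 'k::times) \<Rightarrow> (idx \<Rightarrow> 'k) \<Rightarrow> idx \<times> idx \<Rightarrow> 'k" where
  "ptens f h = (\<lambda>(t1, t2). f t1 * h t2)"

primrec tpow :: "nat \<Rightarrow> nat \<Rightarrow> 'k::comm_ring_1 \<Rightarrow> (idx \<times> idx \<Rightarrow> 'k) \<Rightarrow> nat \<Rightarrow> idx \<times> idx \<Rightarrow> 'k" where
  "tpow n w \<gamma> F 0 = ptens (nf n w 0 0 0) (nf n w 0 0 0)"
| "tpow n w \<gamma> F (Suc m) = tmul n w \<gamma> (tpow n w \<gamma> F m) F"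

definition gE :: "nat \<Rightarrow> nat \<Rightarrow> idx \<Rightarrow> 'k::comm_ring_1" where "gE n w = nf n w 1 0 0"
definition yE :: "nat \<Rightarrow> nat \<Rightarrow> idx \<Rightarrow> 'k::comm_ring_1" where "yE n w = nf n w 0 0 1"
definition xE :: "nat \<Rightarrow> nat \<Rightarrow> int \<Rightarrow> idx \<Rightarrow> 'k::comm_ring_1" where "xE n w k = nf n w 0 k 0"
definition oneE :: "nat \<Rightarrow> nat \<Rightarrow> idx \<Rightarrow> 'k::comm_ring_1" where "oneE n w = nf n w 0 0 0"

text \<open>Comultiplication on basis elements, extended multiplicatively from
  Delta(x) = x (x) x, Delta(g) = g (x) g, Delta(y) = y (x) g + 1 (x) y.\<close>
definition Delta :: "nat \<Rightarrow> nat \<Rightarrow> 'k::comm_ring_1 \<Rightarrow> idx \<Rightarrow> idx \<times> idx \<Rightarrow> 'k" where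
  "Delta n w \<gamma> b = (case b of (j, k, l) \<Rightarrow>
     tmul n w \<gamma>
       (tmul n w \<gamma> (tpow n w \<gamma> (ptens (gE n w) (gE n w)) j)
                   (ptens (xE n w k) (xE n w k)))
       (tpow n w \<gamma> (\<lambda>t. ptens (yE n w) (gE n w) t + ptens (oneE n w) (yE n w) t) l))"

text \<open>(Delta (x) id) o Delta on basis elements.\<close>
definition Delta2 :: "nat \<Rightarrow> nat \<Rightarrow> 'k::comm_ring_1 \<Rightarrow> idx \<Rightarrow> idx \<times> idx \<times> idx \<Rightarrow> 'k" where
  "Delta2 n w \<gamma> b = (\<lambda>(c1, c2, c3). \<Sum>p\<in>supp (Delta n w \<gamma> b).
      Delta n w \<gamma> b p * Delta n w \<gamma> (fst p) (c1, c2) * bas (snd p) c3)"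

definition eps :: "idx \<Rightarrow> 'k::zero_neq_one" where
  "eps b = (case b of (j, k, l) \<Rightarrow> if l = 0 then 1 else 0)"

text \<open>Antipode on basis elements, extended anti-multiplicatively from
  S(x) = x^-1, S(g) = g^-1 = g^(n-1) x^(-w), S(y) = - y g^-1.\<close>
definition ginvE :: "nat \<Rightarrow> nat \<Rightarrow> idx \<Rightarrow> 'k::comm_ring_1" where
  "ginvE n w = nf n w (n - 1) (- int w) 0"

definition Santi :: "nat \<Rightarrow> nat \<Rightarrow> 'k::comm_ring_1 \<Rightarrow> idx \<Rightarrow> idx \<Rightarrow> 'k" where
  "Santi n w \<gamma> b = (case b of (j, k, l) \<Rightarrow>
     hmul n w \<gamma>
       (hmul n w \<gamma> (hpow n w \<gamma> (\<lambda>t. - hmul n w \<gamma> (yE n w) (ginvE n w) t) l) (xE n w (- k)))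
       (hpow n w \<gamma> (ginvE n w) j))"

section \<open>Yetter-Drinfeld modules, on V = 'k^'d (any nonzero finite-dimensional space)\<close>

primrec mpow :: "'k::semiring_1^'d^'d \<Rightarrow> nat \<Rightarrow> 'k^'d^'d" where
  "mpow M 0 = mat 1"
| "mpow M (Suc m) = mpow M m ** M"

definition smat :: "'k::times \<Rightarrow> 'k^'d^'d \<Rightarrow> 'k^'d^'d" where
  "smat c M = (\<chi> i j. c * M $ i $ j)"

definition xpow :: "'k::semiring_1^'d^'d \<Rightarrow> 'k^'d^'d \<Rightarrow> int \<Rightarrow> 'k^'d^'d" where
  "xpow X Xi k = (if k \<ge> 0 then mpow X (nat k) else mpow Xi (nat (- k)))"

definition rho :: "'k::semiring_1^'d^'d \<Rightarrow> 'k^'d^'d \<Rightarrow> 'k^'d^'d \<Rightarrow> 'k^'d^'d \<Rightarrow> idx \<Rightarrow> 'k^'d^'d" where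
  "rho X Xi G Y b = (case b of (j, k, l) \<Rightarrow> mpow G j ** xpow X Xi k ** mpow Y l)"

text \<open>Left H-module: operators X (invertible, inverse Xi), G, Y satisfying
  the defining relations of H.\<close>
definition H_module :: "nat \<Rightarrow> nat \<Rightarrow> 'k::comm_ring_1 \<Rightarrow> 'k^'d^'d \<Rightarrow> 'k^'d^'d \<Rightarrow> 'k^'d^'d \<Rightarrow> 'k^'d^'d \<Rightarrow> bool" where
  "H_module n w \<gamma> X Xi G Y \<longleftrightarrow>
     X ** Xi = mat 1 \<and> Xi ** X = mat 1 \<and> X ** G = G ** X \<and> X ** Y = Y ** X \<and>
     Y ** G = smat \<gamma> (G ** Y) \<and>
     mpow Y n = mat 1 - mpow X w \<and> mpow Y n = mat 1 - mpow G n"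

text \<open>Left H-comodule: delta(v) = sum_b b (x) (D b) v, with D b = 0 for
  all but finitely many basis indices b.\<close>
definition H_comodule :: "nat \<Rightarrow> nat \<Rightarrow> 'k::comm_ring_1 \<Rightarrow> (idx \<Rightarrow> 'k^'d^'d) \<Rightarrow> bool" where
  "H_comodule n w \<gamma> D \<longleftrightarrow>
     finite (supp D) \<and>
     (\<forall>j k l. D (j, k, l) \<noteq> 0 \<longrightarrow> j < n \<and> l < n) \<and>
     (\<forall>c1 c2. (\<Sum>b\<in>supp D. smat (Delta n w \<gamma> b (c1, c2)) (D b)) = D c2 ** D c1) \<and>
     (\<Sum>b\<in>supp D. smat (eps b) (D b)) = mat 1"

text \<open>Yetter-Drinfeld compatibility
  delta(h.v) = h(1) v(-1) S(h(3)) (x) h(2).v(0), for all basis elements h = b.\<close>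
definition YD_compat :: "nat \<Rightarrow> nat \<Rightarrow> 'k::comm_ring_1 \<Rightarrow> 'k^'d^'d \<Rightarrow> 'k^'d^'d \<Rightarrow> 'k^'d^'d \<Rightarrow> 'k^'d^'d
     \<Rightarrow> (idx \<Rightarrow> 'k^'d^'d) \<Rightarrow> bool" where
  "YD_compat n w \<gamma> X Xi G Y D \<longleftrightarrow>
     (\<forall>j k l c. j < n \<longrightarrow> l < n \<longrightarrow>
        D c ** rho X Xi G Y (j, k, l) =
        (\<Sum>e\<in>supp (Delta2 n w \<gamma> (j, k, l)). \<Sum>a\<in>supp D.
           smat (Delta2 n w \<gamma> (j, k, l) e *
                 hmul n w \<gamma> (hmul n w \<gamma> (bas (fst e)) (bas a)) (Santi n w \<gamma> (snd (snd e))) c)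
                (rho X Xi G Y (fst (snd e)) ** D a)))"

definition YD_module :: "nat \<Rightarrow> nat \<Rightarrow> 'k::comm_ring_1 \<Rightarrow> 'k^'d^'d \<Rightarrow> 'k^'d^'d \<Rightarrow> 'k^'d^'d \<Rightarrow> 'k^'d^'d
     \<Rightarrow> (idx \<Rightarrow> 'k^'d^'d) \<Rightarrow> bool" where
  "YD_module n w \<gamma> X Xi G Y D \<longleftrightarrow>
     H_module n w \<gamma> X Xi G Y \<and> H_comodule n w \<gamma> D \<and> YD_compat n w \<gamma> X Xi G Y D"

text \<open>Standard element of type (alpha, beta, h), h = g^j x^k in G(H).\<close>
definition standard_element :: "nat \<Rightarrow> 'k::comm_ring_1^'d^'d \<Rightarrow> 'k^'d^'d \<Rightarrow> (idx \<Rightarrow> 'k^'d^'d) \<Rightarrow> 'k^'d \<Rightarrow> bool" where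
  "standard_element n X G D v \<longleftrightarrow> v \<noteq> 0 \<and>
     (\<exists>\<alpha> \<beta> j k. \<alpha> \<noteq> 0 \<and> \<beta> \<noteq> 0 \<and> j < n \<and>
        X *v v = \<alpha> *s v \<and> G *v v = \<beta> *s v \<and>
        (\<forall>c. D c *v v = (if c = (j, k, 0) then v else 0)))"

end

theory Submission
  imports Defs
begin

text \<open>
  Grade H by the y-degree. The comultiplication respects this grading, so if D c1 is a
  coefficient of the coaction of maximal y-degree, every vector v in its image is killed by all
  coefficients of positive y-degree. The counit axiom then gives a group-like h = g^j x^k with
  D h v \<noteq> 0, and coassociativity shows that D h v lies in
  V_h = {u. \<delta>(u) = h \<otimes> u}. Since G(H) is abelian, the Yetter-Drinfeld condition
  makes V_h stable under the group-likes, in particular under x and g. These commute, so over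
  an algebraically closed field they have a common eigenvector in V_h; its eigenvalues are
  nonzero because x is invertible and g^n = x^w.
\<close>

section \<open>Group-like elements of H\<close>

lemma supp_bas [simp]: "supp (bas p :: _ \<Rightarrow> 'k::zero_neq_one) = {p}"
  by (auto simp: supp_def bas_def)

lemma bas_nonzero_imp_eq: "bas p t \<noteq> 0 \<Longrightarrow> t = p"
  by (simp add: bas_def split: if_splits)

lemma nf_y_degree_0: "nf n w a b 0 = bas (a mod n, b + int w * int (a div n), 0)"
  by (simp add: nf_def)

lemma nf_nonzero_imp_y_degree:
  assumes "nf n w a b c t \<noteq> (0::'k::comm_ring_1)"
  shows "snd (snd t) = c mod n"
proof -
  obtain i where "bas (a mod n, b + int w * int (a div n) + int w * int i, c mod n) t \<noteq> (0::'k)"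
    using assms unfolding nf_def by (metis (no_types, lifting) mult_zero_right sum.neutral)
  then show ?thesis by (auto dest: bas_nonzero_imp_eq)
qed

lemma hmul_bas: "hmul n w \<gamma> (bas p) (bas q) = bmul n w \<gamma> p q"
  unfolding hmul_def supp_bas by (simp add: bas_def)

lemma ptens_bas: "ptens (bas p) (bas q) = (bas (p, q) :: _ \<Rightarrow> 'k::{zero_neq_one,mult_zero,monoid_mult})"
  by (auto simp: ptens_def bas_def fun_eq_iff)

lemma tmul_bas:
  "tmul n w \<gamma> (bas (p1, p2)) (bas (q1, q2)) = ptens (bmul n w \<gamma> p1 q1) (bmul n w \<gamma> p2 q2)"
  unfolding tmul_def supp_bas by (simp add: bas_def ptens_def fun_eq_iff)

lemma bmul_grouplike:
  assumes "n > 0"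
  shows "bmul n w \<gamma> (a mod n, b + int w * int (a div n), 0) (d mod n, e + int w * int (d div n), 0)
     = nf n w (a + d) (b + e) 0"
proof -
  have "(a + d) div n = a div n + d div n + (a mod n + d mod n) div n"
    by (rule div_add1_eq)
  then have "b + int w * int (a div n) + (e + int w * int (d div n))
        + int w * int ((a mod n + d mod n) div n) = b + e + int w * int ((a + d) div n)"
    by (simp add: distrib_left)
  then show ?thesis
    by (simp add: bmul_def nf_y_degree_0 mod_add_eq algebra_simps)
qed

lemma hmul_grouplike:
  "n > 0 \<Longrightarrow> hmul n w \<gamma> (nf n w a b 0) (nf n w d e 0) = nf n w (a + d) (b + e) 0"
  by (simp add: nf_y_degree_0 hmul_bas bmul_grouplike[unfolded nf_y_degree_0])

lemma hpow_grouplike: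
  "n > 0 \<Longrightarrow> hpow n w \<gamma> (nf n w a b 0) m = nf n w (a * m) (b * int m) 0"
  by (induction m) (simp_all add: hmul_grouplike algebra_simps)

lemma tmul_ptens_grouplike:
  "n > 0 \<Longrightarrow> tmul n w \<gamma> (ptens (nf n w a b 0) (nf n w a' b' 0)) (ptens (nf n w d e 0) (nf n w d' e' 0))
     = ptens (nf n w (a + d) (b + e) 0) (nf n w (a' + d') (b' + e') 0)"
  by (simp add: nf_y_degree_0 ptens_bas tmul_bas bmul_grouplike[unfolded nf_y_degree_0])

lemma tpow_ptens_grouplike:
  "n > 0 \<Longrightarrow> tpow n w \<gamma> (ptens (nf n w a b 0) (nf n w a b 0)) m
     = ptens (nf n w (a * m) (b * int m) 0) (nf n w (a * m) (b * int m) 0)"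
  by (induction m) (simp_all add: tmul_ptens_grouplike algebra_simps)

lemma Delta_grouplike:
  assumes "n > 0" "j < n"
  shows "Delta n w \<gamma> (j, k, 0) = bas ((j, k, 0), (j, k, 0))"
proof -
  have "Delta n w \<gamma> (j, k, 0) = ptens (nf n w j k 0) (nf n w j k 0)"
    using tpow_ptens_grouplike[OF assms(1), of w \<gamma> 1 0 j]
    by (simp add: Delta_def gE_def xE_def tmul_ptens_grouplike[OF assms(1)])
  then show ?thesis
    using assms by (simp add: nf_y_degree_0 ptens_bas)
qed

lemma Delta2_grouplike:
  assumes "n > 0" "j < n"
  shows "Delta2 n w \<gamma> (j, k, 0) = bas ((j, k, 0), (j, k, 0), (j, k, 0))"
  unfolding Delta2_def Delta_grouplike[OF assms] supp_bas
  by (simp add: Delta_grouplike[OF assms] fun_eq_iff bas_def)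

lemma Santi_grouplike:
  "n > 0 \<Longrightarrow> Santi n w \<gamma> (j, k, 0) = nf n w ((n - 1) * j) (- k - int w * int j) 0"
  by (simp add: Santi_def ginvE_def xE_def hpow_grouplike hmul_grouplike algebra_simps)

text \<open>For group-likes h, h' this says h h' S(h) = h', which holds as G(H) is abelian.\<close>
lemma grouplike_adjoint:
  assumes "n > 0" "j < n" "j' < n"
  shows "hmul n w \<gamma> (hmul n w \<gamma> (bas (j, k, 0)) (bas (j', k', 0))) (Santi n w \<gamma> (j, k, 0))
    = bas (j', k', 0)"
proof -
  have bas_eq_nf: "bas (i, m, 0) = nf n w i m 0" if "i < n" for i m
    using that by (simp add: nf_y_degree_0)
  have g_exponent: "j + j' + (n - 1) * j = j' + n * j"
    using assms(1) by (cases n) (auto simp: algebra_simps)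
  have x_exponent: "k + k' + (- k - int w * int j) = k' - int w * int j"
    by simp
  have "hmul n w \<gamma> (hmul n w \<gamma> (bas (j, k, 0)) (bas (j', k', 0))) (Santi n w \<gamma> (j, k, 0))
      = nf n w (j + j' + (n - 1) * j) (k + k' + (- k - int w * int j)) 0"
    using assms by (simp add: bas_eq_nf Santi_grouplike hmul_grouplike)
  also have "\<dots> = nf n w (j' + n * j) (k' - int w * int j) 0"
    by (simp only: g_exponent x_exponent)
  also have "\<dots> = bas (j', k', 0)"
    using assms by (simp add: nf_y_degree_0)
  finally show ?thesis .
qed

section \<open>The y-degree grading of the comultiplication\<close>

definition y_graded :: "(idx \<times> idx \<Rightarrow> 'k::zero) \<Rightarrow> nat \<Rightarrow> bool" where
  "y_graded F L \<longleftrightarrow> (\<forall>c1 c2. F (c1, c2) \<noteq> 0 \<longrightarrow> snd (snd c1) + snd (snd c2) = L)"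

lemma bmul_nonzero_imp_y_degree:
  assumes "bmul n w \<gamma> p q t \<noteq> (0::'k::comm_ring_1)"
  shows "snd (snd t) = (snd (snd p) + snd (snd q)) mod n"
proof -
  obtain a b c d e f where pq: "p = (a, b, c)" "q = (d, e, f)"
    by (cases p; cases q) auto
  have "nf n w (a + d) (b + e) (c + f) t \<noteq> (0::'k)"
    using assms pq by (auto simp: bmul_def)
  then show ?thesis
    using pq by (auto dest!: nf_nonzero_imp_y_degree)
qed

lemma y_graded_tmul:
  assumes F: "y_graded F L1" and K: "y_graded K L2" and "L1 + L2 < n"
  shows "y_graded (tmul n w \<gamma> F K) (L1 + L2)"
  unfolding y_graded_def
proof (intro allI impI)
  fix c1 c2
  assume "tmul n w \<gamma> F K (c1, c2) \<noteq> 0"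
  then have "(\<Sum>p\<in>supp F. \<Sum>q\<in>supp K.
      F p * K q * bmul n w \<gamma> (fst p) (fst q) c1 * bmul n w \<gamma> (snd p) (snd q) c2) \<noteq> 0"
    by (simp add: tmul_def)
  then obtain p q where
    "F p * K q * bmul n w \<gamma> (fst p) (fst q) c1 * bmul n w \<gamma> (snd p) (snd q) c2 \<noteq> 0"
    by (meson sum.not_neutral_contains_not_neutral)
  then have nonzero: "F p \<noteq> 0" "K q \<noteq> 0"
      "bmul n w \<gamma> (fst p) (fst q) c1 \<noteq> 0" "bmul n w \<gamma> (snd p) (snd q) c2 \<noteq> 0"
    by auto
  obtain p1 p2 q1 q2 where pq: "p = (p1, p2)" "q = (q1, q2)"
    by (cases p; cases q) auto
  have "snd (snd p1) + snd (snd p2) = L1" "snd (snd q1) + snd (snd q2) = L2"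
    using F K nonzero(1,2) pq unfolding y_graded_def by blast+
  with assms(3) bmul_nonzero_imp_y_degree[OF nonzero(3)] bmul_nonzero_imp_y_degree[OF nonzero(4)]
  show "snd (snd c1) + snd (snd c2) = L1 + L2"
    using pq by simp
qed

lemma y_graded_ptens_nf:
  "y_graded (ptens (nf n w a b c) (nf n w a' b' c') :: _ \<Rightarrow> 'k::comm_ring_1) (c mod n + c' mod n)"
  unfolding y_graded_def ptens_def
  by (auto dest!: mult_not_zero nf_nonzero_imp_y_degree)

lemma y_graded_add:
  fixes F K :: "idx \<times> idx \<Rightarrow> 'k::comm_monoid_add"
  assumes "y_graded F L" "y_graded K L"
  shows "y_graded (\<lambda>t. F t + K t) L"
  using assms unfolding y_graded_def by (metis add.right_neutral)

lemma y_graded_Delta_y_power: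
  "m < n \<Longrightarrow> y_graded
     (tpow n w \<gamma> (\<lambda>t. ptens (yE n w) (gE n w) t + ptens (oneE n w) (yE n w) t) m :: _ \<Rightarrow> 'k::comm_ring_1) m"
proof (induction m)
  case 0
  then show ?case
    using y_graded_ptens_nf[of n w 0 0 0 0 0 0] by simp
next
  case (Suc m)
  have "y_graded (\<lambda>t. ptens (yE n w) (gE n w) t + ptens (oneE n w) (yE n w) t :: 'k) 1"
    using y_graded_ptens_nf[of n w 0 0 1 1 0 0] y_graded_ptens_nf[of n w 0 0 0 0 0 1] Suc.prems
    by (intro y_graded_add) (simp_all add: yE_def gE_def oneE_def)
  with Suc y_graded_tmul[of _ m _ 1 n w \<gamma>] show ?case
    by simp
qed

lemma y_graded_Delta:
  assumes "n > 0" "l < n"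
  shows "y_graded (Delta n w \<gamma> (j, k, l) :: _ \<Rightarrow> 'k::comm_ring_1) l"
proof -
  have "y_graded (tmul n w \<gamma> (tpow n w \<gamma> (ptens (gE n w) (gE n w)) j) (ptens (xE n w k) (xE n w k))
      :: _ \<Rightarrow> 'k) 0"
    using y_graded_ptens_nf[of n w j k 0 j k 0]
    by (simp add: gE_def xE_def tpow_ptens_grouplike tmul_ptens_grouplike assms(1))
  then show ?thesis
    using y_graded_tmul[OF _ y_graded_Delta_y_power[OF assms(2)], of _ 0] assms
    by (simp add: Delta_def)
qed

section \<open>Polynomials in a matrix and common eigenvectors\<close>

lemma smat_0: "smat 0 M = (0 :: 'k::mult_zero^'d^'d)"
  by (simp add: smat_def vec_eq_iff)

lemma smat_mult_vec: "smat c M *v v = c *s (M *v (v :: 'k::comm_semiring_1^'d::finite))"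
  by (simp add: smat_def vec_eq_iff matrix_vector_mult_def sum_distrib_left mult.assoc)

lemma sum_mult_vec: "sum M S *v v = (\<Sum>a\<in>S. M a *v (v :: 'k::comm_semiring_1^'d::finite))"
  by (induction S rule: infinite_finite_induct) (simp_all add: matrix_vector_mult_add_rdistrib)

lemma mpow_Suc_left: "mpow A (Suc i) = A ** mpow (A :: 'k::semiring_1^'d::finite^'d) i"
proof (induction i)
  case (Suc i)
  have "mpow A (Suc (Suc i)) = (A ** mpow A i) ** A"
    using Suc by simp
  also have "\<dots> = A ** mpow A (Suc i)"
    by (simp add: matrix_mul_assoc)
  finally show ?case .
qed simp

lemma mpow_Suc_mult_vec:
  "mpow A (Suc i) *v v = A *v (mpow A i *v (v :: 'k::semiring_1^'d::finite))"
  by (simp only: mpow_Suc_left matrix_vector_mul_assoc)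

lemma mpow_mult_eigenvector:
  fixes A :: "'k::field^'d::finite^'d"
  assumes "A *v v = c *s v"
  shows "mpow A i *v v = c ^ i *s v"
  by (induction i) (simp_all del: mpow.simps(2)
      add: mpow_Suc_mult_vec assms vector_scalar_commute vector_smult_assoc mult.commute)

lemma mpow_mult_vec_in_invariant:
  assumes "\<forall>x\<in>W. A *v x \<in> W" and "x \<in> W"
  shows "mpow A i *v x \<in> W"
  using assms by (induction i) (simp_all del: mpow.simps(2) add: mpow_Suc_mult_vec)

definition poly_mult_vec :: "'k::field poly \<Rightarrow> 'k^'d::finite^'d \<Rightarrow> 'k^'d \<Rightarrow> 'k^'d" where
  "poly_mult_vec p A v = (\<Sum>i\<le>degree p. coeff p i *s (mpow A i *v v))"

lemma poly_mult_vec_eq_sum: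
  "degree p \<le> N \<Longrightarrow> poly_mult_vec p A v = (\<Sum>i\<le>N. coeff p i *s (mpow A i *v v))"
  unfolding poly_mult_vec_def by (rule sum.mono_neutral_left) (auto simp: coeff_eq_0)

lemma poly_mult_vec_add: "poly_mult_vec (p + q) A v = poly_mult_vec p A v + poly_mult_vec q A v"
proof -
  let ?N = "max (degree p) (degree q)"
  have "poly_mult_vec (p + q) A v = (\<Sum>i\<le>?N. coeff (p + q) i *s (mpow A i *v v))"
    by (rule poly_mult_vec_eq_sum) (simp add: degree_add_le)
  then show ?thesis
    by (simp add: poly_mult_vec_eq_sum[of _ ?N] vector_sadd_rdistrib sum.distrib)
qed

lemma poly_mult_vec_smult: "poly_mult_vec (smult c p) A v = c *s poly_mult_vec p A v"
  using poly_mult_vec_eq_sum[of "smult c p" "degree p"]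
  by (simp add: poly_mult_vec_def vec.scale_sum_right vector_smult_assoc degree_smult_le)

lemma poly_mult_vec_pCons_0: "poly_mult_vec (pCons 0 p) A v = A *v poly_mult_vec p A v"
proof -
  have "poly_mult_vec (pCons 0 p) A v
      = (\<Sum>i\<le>Suc (degree p). coeff (pCons 0 p) i *s (mpow A i *v v))"
    by (rule poly_mult_vec_eq_sum) (simp add: degree_pCons_le)
  also have "\<dots> = (\<Sum>i\<le>degree p. coeff p i *s (mpow A (Suc i) *v v))"
    by (simp only: sum.atMost_Suc_shift) simp
  finally show ?thesis
    by (simp del: mpow.simps(2)
        add: poly_mult_vec_def vec.sum mpow_Suc_mult_vec vector_scalar_commute)
qed

lemma poly_mult_vec_linear_factor:
  "poly_mult_vec ([:- z, 1:] * q) A v = A *v poly_mult_vec q A v - z *s poly_mult_vec q A v"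
proof -
  have "[:- z, 1:] * q = pCons 0 q + smult (- z) q"
    by (simp add: mult_pCons_left)
  then show ?thesis
    by (simp only: poly_mult_vec_add poly_mult_vec_smult poly_mult_vec_pCons_0) simp
qed

lemma poly_mult_vec_in_invariant:
  assumes "vec.subspace W" and "\<forall>x\<in>W. A *v x \<in> W" and "x \<in> W"
  shows "poly_mult_vec p A x \<in> W"
  unfolding poly_mult_vec_def
  by (intro vec.subspace_sum vec.subspace_scale mpow_mult_vec_in_invariant assms)

lemma poly_mult_vec_sum_monom:
  "poly_mult_vec (\<Sum>i\<le>N. monom (c i) i) A v = (\<Sum>i\<le>N. c i *s (mpow A i *v v))"
proof -
  have "degree (\<Sum>i\<le>N. monom (c i) i) \<le> N"
    by (intro degree_sum_le) (auto intro: order.trans[OF degree_monom_le])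
  then have "poly_mult_vec (\<Sum>i\<le>N. monom (c i) i) A v
      = (\<Sum>i\<le>N. coeff (\<Sum>i\<le>N. monom (c i) i) i *s (mpow A i *v v))"
    by (rule poly_mult_vec_eq_sum)
  also have "\<dots> = (\<Sum>i\<le>N. c i *s (mpow A i *v v))"
    by (intro sum.cong refl) (simp add: coeff_sum coeff_monom)
  finally show ?thesis .
qed

lemma vec_family_dependent:
  fixes f :: "nat \<Rightarrow> 'k::field^'d::finite"
  shows "\<exists>c. (\<exists>i\<le>CARD('d). c i \<noteq> 0) \<and> (\<Sum>i\<le>CARD('d). c i *s f i) = 0"
proof (cases "inj_on f {..CARD('d)}")
  case True
  let ?S = "f ` {..CARD('d)}"
  have "vec.dim ?S \<le> CARD('d)"
    using vec.dim_subset[of ?S UNIV] by (simp add: vec.dim_UNIV card_cart_basis)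
  then have "vec.dependent ?S"
    using True by (intro vec.dependent_biggerset_general) (simp add: card_image)
  then obtain u where u: "\<exists>v\<in>?S. u v \<noteq> 0" "(\<Sum>v\<in>?S. u v *s v) = 0"
    using vec.dependent_finite[of ?S] by auto
  have "(\<Sum>i\<le>CARD('d). u (f i) *s f i) = 0"
    using u(2) sum.reindex[OF True, of "\<lambda>v. u v *s v"] by simp
  with u(1) show ?thesis
    by (intro exI[of _ "u \<circ> f"]) auto
next
  case False
  then obtain i j where ij: "i \<le> CARD('d)" "j \<le> CARD('d)" "i \<noteq> j" "f i = f j"
    unfolding inj_on_def by auto
  let ?c = "\<lambda>m. (if m = i then 1 else 0) - (if m = j then 1 else 0) :: 'k"
  have "(\<Sum>m\<le>CARD('d). ?c m *s f m) = f i - f j"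
    using ij by (simp add: vec.scale_left_diff_distrib sum_subtractf if_distrib[of "\<lambda>a. a *s _"]
        cong: if_cong)
  with ij show ?thesis
    by (intro exI[of _ ?c]) auto
qed

lemma exists_poly_annihilating_vector:
  fixes A :: "'k::field^'d::finite^'d"
  shows "\<exists>p. p \<noteq> 0 \<and> poly_mult_vec p A v = 0"
proof -
  obtain c where c: "\<exists>i\<le>CARD('d). c i \<noteq> 0" "(\<Sum>i\<le>CARD('d). c i *s (mpow A i *v v)) = 0"
    using vec_family_dependent[of "\<lambda>i. mpow A i *v v"] by blast
  let ?p = "\<Sum>i\<le>CARD('d). monom (c i) i"
  from c(1) obtain i where "i \<le> CARD('d)" "c i \<noteq> 0"
    by blast
  then have "coeff ?p i \<noteq> 0"
    by (simp add: coeff_sum coeff_monom)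
  then have "?p \<noteq> 0"
    by auto
  with c(2) show ?thesis
    by (auto simp only: poly_mult_vec_sum_monom)
qed

text \<open>Split off linear factors of p until a nonzero vector is killed by a single factor A - z.\<close>
lemma eigenvector_of_annihilating_poly:
  fixes A :: "'k::field^'d::finite^'d"
  assumes alg_closed: "\<forall>p :: 'k poly. degree p > 0 \<longrightarrow> (\<exists>z. poly p z = 0)"
    and W: "vec.subspace W" and inv: "\<forall>x\<in>W. A *v x \<in> W" and u: "u \<in> W" "u \<noteq> 0"
    and "p \<noteq> 0" "poly_mult_vec p A u = 0"
  shows "\<exists>v\<in>W. v \<noteq> 0 \<and> (\<exists>c. A *v v = c *s v)"
  using \<open>p \<noteq> 0\<close> \<open>poly_mult_vec p A u = 0\<close>
proof (induction "degree p" arbitrary: p rule: less_induct)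
  case less
  show ?case
  proof (cases "degree p = 0")
    case True
    then have "coeff p 0 \<noteq> 0"
      using less.prems(1) leading_coeff_0_iff[of p] by simp
    with True less.prems(2) u(2) have False
      by (simp add: poly_mult_vec_def)
    then show ?thesis ..
  next
    case False
    then obtain z where "poly p z = 0"
      using alg_closed by auto
    then obtain q where pq: "p = [:- z, 1:] * q"
      by (auto simp: poly_eq_0_iff_dvd elim: dvdE)
    with less.prems(1) have "q \<noteq> 0"
      by auto
    then have "degree q < degree p"
      unfolding pq by (subst degree_mult_eq) auto
    have eigen: "A *v poly_mult_vec q A u = z *s poly_mult_vec q A u"
      using less.prems(2) unfolding pq poly_mult_vec_linear_factor by simp
    show ?thesis
    proof (cases "poly_mult_vec q A u = 0")
      case True
      with less.hyps[OF \<open>degree q < degree p\<close> \<open>q \<noteq> 0\<close>] show ?thesis .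
    next
      case False
      with eigen poly_mult_vec_in_invariant[OF W inv u(1), of q] show ?thesis
        by blast
    qed
  qed
qed

lemma eigenvector_in_invariant_subspace:
  fixes A :: "'k::field^'d::finite^'d"
  assumes alg_closed: "\<forall>p :: 'k poly. degree p > 0 \<longrightarrow> (\<exists>z. poly p z = 0)"
    and "vec.subspace W" "\<forall>x\<in>W. A *v x \<in> W" "u \<in> W" "u \<noteq> 0"
  shows "\<exists>v\<in>W. v \<noteq> 0 \<and> (\<exists>c. A *v v = c *s v)"
proof -
  obtain p where "p \<noteq> 0" "poly_mult_vec p A u = 0"
    using exists_poly_annihilating_vector[of A u] by blast
  with eigenvector_of_annihilating_poly[OF assms] show ?thesis .
qed

lemma common_eigenvector_in_invariant_subspace:
  fixes A B :: "'k::field^'d::finite^'d"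
  assumes alg_closed: "\<forall>p :: 'k poly. degree p > 0 \<longrightarrow> (\<exists>z. poly p z = 0)"
    and W: "vec.subspace W" "u \<in> W" "u \<noteq> 0"
    and inv: "\<forall>x\<in>W. A *v x \<in> W" "\<forall>x\<in>W. B *v x \<in> W"
    and comm: "A ** B = B ** A"
  shows "\<exists>v\<in>W. v \<noteq> 0 \<and> (\<exists>a. A *v v = a *s v) \<and> (\<exists>b. B *v v = b *s v)"
proof -
  obtain v1 a where v1: "v1 \<in> W" "v1 \<noteq> 0" "A *v v1 = a *s v1"
    using eigenvector_in_invariant_subspace[OF alg_closed W(1) inv(1) W(2,3)] by blast
  define E where "E = W \<inter> {x. A *v x = a *s x}"
  have E: "vec.subspace E"
    using W(1) unfolding E_def vec.subspace_def
    by (auto simp: matrix_vector_right_distrib vector_scalar_commute vec.scale_right_distrib)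
  have "\<forall>x\<in>E. B *v x \<in> E"
  proof
    fix x
    assume x: "x \<in> E"
    have "A *v (B *v x) = B *v (A *v x)"
      by (simp add: matrix_vector_mul_assoc comm)
    with x inv(2) show "B *v x \<in> E"
      unfolding E_def by (simp add: vector_scalar_commute)
  qed
  moreover have "v1 \<in> E"
    using v1 unfolding E_def by simp
  ultimately obtain v where "v \<in> E" "v \<noteq> 0" "\<exists>b. B *v v = b *s v"
    using eigenvector_in_invariant_subspace[OF alg_closed E] v1(2) by blast
  then show ?thesis
    unfolding E_def by blast
qed

section \<open>Comodule components of group-like elements\<close>

lemma H_comodule_supp:
  assumes "H_comodule n w \<gamma> D" "b \<in> supp D"
  shows "fst b < n \<and> snd (snd b) < n"
  using assms unfolding H_comodule_def supp_def by (cases b) auto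

lemma H_comodule_coeff_mult_eq_0:
  assumes comod: "H_comodule n w \<gamma> D" and "n > 0"
    and deg: "\<forall>b\<in>supp D. snd (snd b) < snd (snd c1) + snd (snd c2)"
  shows "D c2 ** D c1 = 0"
proof -
  have "Delta n w \<gamma> b (c1, c2) = 0" if "b \<in> supp D" for b
  proof -
    obtain j k l where b: "b = (j, k, l)"
      by (cases b)
    with H_comodule_supp[OF comod that] have "l < n"
      by simp
    with b have "y_graded (Delta n w \<gamma> b) l"
      using y_graded_Delta[OF \<open>n > 0\<close>] by simp
    then have "Delta n w \<gamma> b (c1, c2) \<noteq> 0 \<Longrightarrow> snd (snd c1) + snd (snd c2) = l"
      unfolding y_graded_def by blast
    moreover have "l < snd (snd c1) + snd (snd c2)"
      using deg that b by auto
    ultimately show ?thesis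
      by auto
  qed
  then have "(\<Sum>b\<in>supp D. smat (Delta n w \<gamma> b (c1, c2)) (D b)) = 0"
    by (simp add: smat_0)
  moreover have "(\<Sum>b\<in>supp D. smat (Delta n w \<gamma> b (c1, c2)) (D b)) = D c2 ** D c1"
    using comod unfolding H_comodule_def by blast
  ultimately show ?thesis
    by simp
qed

text \<open>Take v in the image of a coefficient D c1 of maximal y-degree.\<close>
lemma H_comodule_exists_vector_killed_by_y:
  fixes D :: "idx \<Rightarrow> 'k::field^'d::finite^'d"
  assumes comod: "H_comodule n w \<gamma> D" and "n > 0"
  shows "\<exists>v. v \<noteq> 0 \<and> (\<forall>c. 0 < snd (snd c) \<longrightarrow> D c *v v = 0)"
proof -
  have fin: "finite (supp D)" and counit: "(\<Sum>b\<in>supp D. smat (eps b) (D b)) = mat 1"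
    using comod unfolding H_comodule_def by auto
  have "mat 1 \<noteq> (0 :: 'k^'d^'d)"
    by (simp add: vec_eq_iff mat_def)
  with counit have "supp D \<noteq> {}"
    by auto
  then obtain c0 where "c0 \<in> supp D"
    by blast
  then obtain c1 where c1: "c1 \<in> supp D" "\<forall>b\<in>supp D. snd (snd b) \<le> snd (snd c1)"
    using ex_has_greatest_nat[of "\<lambda>b. b \<in> supp D" c0 "\<lambda>b. snd (snd b)" n] H_comodule_supp[OF comod]
    by blast
  then obtain u where u: "D c1 *v u \<noteq> 0"
    using matrix_eq[of "D c1" 0] by (auto simp: supp_def)
  have "D c *v (D c1 *v u) = 0" if "0 < snd (snd c)" for c
  proof -
    have "\<forall>b\<in>supp D. snd (snd b) < snd (snd c1) + snd (snd c)"
      using c1(2) that by fastforce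
    then have "D c ** D c1 = 0"
      by (rule H_comodule_coeff_mult_eq_0[OF comod \<open>n > 0\<close>])
    then show ?thesis
      by (simp add: matrix_vector_mul_assoc)
  qed
  with u show ?thesis
    by blast
qed

definition comod_component :: "(idx \<Rightarrow> 'k::semiring_1^'d::finite^'d) \<Rightarrow> idx \<Rightarrow> ('k^'d) set" where
  "comod_component D h = {v. \<forall>c. D c *v v = (if c = h then v else 0)}"

lemma subspace_comod_component: "vec.subspace (comod_component D h)"
  unfolding vec.subspace_def comod_component_def
  by (auto simp: matrix_vector_right_distrib vector_scalar_commute)

text \<open>By coassociativity D c (D h v) is the sum of Delta b (h, c) D b v over b; only the
  group-like b, for which Delta b = b \<otimes> b, contribute.\<close>
lemma coeff_mult_vec_in_comod_component:
  fixes D :: "idx \<Rightarrow> 'k::field^'d::finite^'d"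
  assumes comod: "H_comodule n w \<gamma> D" and "n > 0"
    and killed: "\<forall>c. 0 < snd (snd c) \<longrightarrow> D c *v v = 0"
  shows "D h *v v \<in> comod_component D h"
  unfolding comod_component_def
proof (intro CollectI allI)
  fix c
  have fin: "finite (supp D)"
    and coass: "(\<Sum>b\<in>supp D. smat (Delta n w \<gamma> b (h, c)) (D b)) = D c ** D h"
    using comod unfolding H_comodule_def by blast+
  have summand: "Delta n w \<gamma> b (h, c) *s (D b *v v) = (if b = h \<and> c = h then D h *v v else 0)"
    if "b \<in> supp D" for b
  proof (cases "snd (snd b) = 0")
    case True
    moreover obtain j k l where "b = (j, k, l)"
      by (cases b)
    ultimately show ?thesis
      using H_comodule_supp[OF comod that] by (auto simp: Delta_grouplike[OF \<open>n > 0\<close>] bas_def)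
  next
    case False
    with killed have "D b *v v = 0"
      by blast
    then show ?thesis
      by auto
  qed
  have "D c *v (D h *v v) = (\<Sum>b\<in>supp D. Delta n w \<gamma> b (h, c) *s (D b *v v))"
    by (simp add: matrix_vector_mul_assoc coass[symmetric] sum_mult_vec smat_mult_vec)
  also have "\<dots> = (\<Sum>b\<in>supp D. if b = h \<and> c = h then D h *v v else 0)"
    using summand by simp
  also have "\<dots> = (if c = h then D h *v v else 0)"
    using fin by (cases "h \<in> supp D") (auto simp: supp_def)
  finally show "D c *v (D h *v v) = (if c = h then D h *v v else 0)" .
qed

lemma H_comodule_exists_grouplike_component:
  fixes D :: "idx \<Rightarrow> 'k::field^'d::finite^'d"
  assumes comod: "H_comodule n w \<gamma> D" and "n > 0"
  shows "\<exists>j k u. j < n \<and> (j, k, 0) \<in> supp D \<and> u \<noteq> 0 \<and> u \<in> comod_component D (j, k, 0)"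
proof -
  obtain v where v: "v \<noteq> 0" and killed: "\<forall>c. 0 < snd (snd c) \<longrightarrow> D c *v v = 0"
    using H_comodule_exists_vector_killed_by_y[OF assms] by blast
  have "(\<Sum>b\<in>supp D. smat (eps b) (D b)) = mat 1"
    using comod unfolding H_comodule_def by auto
  then have "v = (\<Sum>b\<in>supp D. smat (eps b) (D b)) *v v"
    by simp
  also have "\<dots> = (\<Sum>b\<in>supp D. eps b *s (D b *v v))"
    by (simp add: sum_mult_vec smat_mult_vec)
  finally have "(\<Sum>b\<in>supp D. eps b *s (D b *v v)) \<noteq> 0"
    using v by simp
  then obtain h where h: "h \<in> supp D" "eps h *s (D h *v v) \<noteq> 0"
    by (meson sum.not_neutral_contains_not_neutral)
  obtain j k l where hjkl: "h = (j, k, l)"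
    by (cases h)
  with h have "l = 0" "D h *v v \<noteq> 0"
    by (auto simp: eps_def split: if_splits)
  with h(1) hjkl H_comodule_supp[OF comod h(1)]
    coeff_mult_vec_in_comod_component[OF comod \<open>n > 0\<close> killed, of h]
  show ?thesis
    by auto
qed

lemma comod_component_grouplike_invariant:
  fixes D :: "idx \<Rightarrow> 'k::field^'d::finite^'d"
  assumes "n > 0" and YD: "YD_compat n w \<gamma> X Xi G Y D" and fin: "finite (supp D)"
    and h: "(j', k', 0) \<in> supp D" "j' < n" and "j < n"
    and u: "u \<in> comod_component D (j', k', 0)"
  shows "rho X Xi G Y (j, k, 0) *v u \<in> comod_component D (j', k', 0)"
  unfolding comod_component_def
proof (intro CollectI allI)
  fix c
  let ?h = "(j', k', 0) :: idx"
  let ?R = "rho X Xi G Y (j, k, 0)"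
  let ?coeff = "\<lambda>a. hmul n w \<gamma> (hmul n w \<gamma> (bas (j, k, 0)) (bas a)) (Santi n w \<gamma> (j, k, 0)) c"
  have "D c ** ?R = (\<Sum>e\<in>supp (Delta2 n w \<gamma> (j, k, 0)). \<Sum>a\<in>supp D.
      smat (Delta2 n w \<gamma> (j, k, 0) e
          * hmul n w \<gamma> (hmul n w \<gamma> (bas (fst e)) (bas a)) (Santi n w \<gamma> (snd (snd e))) c)
        (rho X Xi G Y (fst (snd e)) ** D a))"
    using YD \<open>j < n\<close> \<open>n > 0\<close> unfolding YD_compat_def by blast
  also have "\<dots> = (\<Sum>a\<in>supp D. smat (?coeff a) (?R ** D a))"
    unfolding Delta2_grouplike[OF \<open>n > 0\<close> \<open>j < n\<close>] supp_bas by (simp add: bas_def)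
  finally have "D c *v (?R *v u) = (\<Sum>a\<in>supp D. ?coeff a *s (?R *v (D a *v u)))"
    by (simp add: matrix_vector_mul_assoc sum_mult_vec smat_mult_vec)
  also have "\<dots> = (\<Sum>a\<in>supp D. if a = ?h then ?coeff ?h *s (?R *v u) else 0)"
    using u unfolding comod_component_def by (intro sum.cong refl) (simp only: mem_Collect_eq, simp)
  also have "\<dots> = ?coeff ?h *s (?R *v u)"
    using fin h(1) by simp
  also have "?coeff ?h = (if c = ?h then 1 else 0)"
    unfolding grouplike_adjoint[OF \<open>n > 0\<close> \<open>j < n\<close> h(2)] by (simp add: bas_def)
  finally show "D c *v (?R *v u) = (if c = ?h then ?R *v u else 0)"
    by simp
qed

lemma H_module_G_grouplike:
  assumes "H_module n w \<gamma> X Xi G Y" and "n > 0"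
  shows "\<exists>j k. j < n \<and> G = rho X Xi G Y (j, k, 0)"
proof (cases "n = 1")
  case True
  have "mpow G n = mpow X w"
    using assms(1) unfolding H_module_def by (metis diff_left_imp_eq)
  with True have "G = rho X Xi G Y (0, int w, 0)"
    by (simp add: rho_def xpow_def)
  with True show ?thesis
    by blast
next
  case False
  with \<open>n > 0\<close> have "1 < n"
    by simp
  then show ?thesis
    by (intro exI[of _ 1] exI[of _ 0]) (simp add: rho_def xpow_def)
qed

lemma comod_component_X_G_invariant:
  fixes D :: "idx \<Rightarrow> 'k::field^'d::finite^'d"
  assumes "YD_module n w \<gamma> X Xi G Y D" and "n > 0"
    and h: "(j, k, 0) \<in> supp D" "j < n"
  shows "\<forall>u\<in>comod_component D (j, k, 0). X *v u \<in> comod_component D (j, k, 0)"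
    and "\<forall>u\<in>comod_component D (j, k, 0). G *v u \<in> comod_component D (j, k, 0)"
proof -
  have YD: "YD_compat n w \<gamma> X Xi G Y D" and "finite (supp D)" and Hmod: "H_module n w \<gamma> X Xi G Y"
    using assms(1) unfolding YD_module_def H_comodule_def by auto
  note invariant = comod_component_grouplike_invariant[OF \<open>n > 0\<close> YD \<open>finite (supp D)\<close> h]
  have "X = rho X Xi G Y (0, 1, 0)"
    by (simp add: rho_def xpow_def)
  with invariant[where j = 0 and k = 1] \<open>n > 0\<close>
  show "\<forall>u\<in>comod_component D (j, k, 0). X *v u \<in> comod_component D (j, k, 0)"
    by simp
  obtain j0 k0 where "j0 < n" "G = rho X Xi G Y (j0, k0, 0)"
    using H_module_G_grouplike[OF Hmod \<open>n > 0\<close>] by blast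
  with invariant show "\<forall>u\<in>comod_component D (j, k, 0). G *v u \<in> comod_component D (j, k, 0)"
    by metis
qed

lemma H_module_eigenvalues_nonzero:
  fixes X G :: "'k::field^'d::finite^'d"
  assumes "H_module n w \<gamma> X Xi G Y" and "n > 0"
    and "v \<noteq> 0" "X *v v = \<alpha> *s v" "G *v v = \<beta> *s v"
  shows "\<alpha> \<noteq> 0" "\<beta> \<noteq> 0"
proof -
  have XiX: "Xi ** X = mat 1" and GX: "mpow G n = mpow X w"
    using assms(1) unfolding H_module_def by (auto dest: diff_left_imp_eq)
  have "v = Xi *v (X *v v)"
    by (simp add: matrix_vector_mul_assoc XiX)
  with assms(3,4) show "\<alpha> \<noteq> 0"
    by auto
  have "\<beta> ^ n *s v = \<alpha> ^ w *s v"
    using mpow_mult_eigenvector[OF assms(5), of n] mpow_mult_eigenvector[OF assms(4), of w] GX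
    by metis
  with assms(3) have "\<beta> ^ n = \<alpha> ^ w"
    using vec.scale_right_imp_eq by blast
  with \<open>\<alpha> \<noteq> 0\<close> \<open>n > 0\<close> show "\<beta> \<noteq> 0"
    by (metis power_0_left power_not_zero not_gr0)
qed

theorem lemma3p3:
  fixes n w :: nat and \<gamma> :: "'k::field_char_0"
    and X Xi G Y :: "'k^'d::finite^'d" and D :: "idx \<Rightarrow> 'k^'d^'d"
  assumes alg_closed: "\<forall>p :: 'k poly. degree p > 0 \<longrightarrow> (\<exists>z. poly p z = 0)"
    and "n > 0" and "w > 0"
    and "\<gamma> ^ n = 1" and "\<forall>m. 0 < m \<and> m < n \<longrightarrow> \<gamma> ^ m \<noteq> 1"
    and "YD_module n w \<gamma> X Xi G Y D"
  shows "\<exists>v. standard_element n X G D v"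
proof -
  have Hmod: "H_module n w \<gamma> X Xi G Y" and comod: "H_comodule n w \<gamma> D"
    using \<open>YD_module n w \<gamma> X Xi G Y D\<close> unfolding YD_module_def by auto
  obtain j k u where h: "j < n" "(j, k, 0) \<in> supp D"
    and u: "u \<noteq> 0" "u \<in> comod_component D (j, k, 0)"
    using H_comodule_exists_grouplike_component[OF comod \<open>n > 0\<close>] by blast
  have "X ** G = G ** X"
    using Hmod unfolding H_module_def by auto
  then obtain v \<alpha> \<beta> where v: "v \<in> comod_component D (j, k, 0)" "v \<noteq> 0"
    and eigen: "X *v v = \<alpha> *s v" "G *v v = \<beta> *s v"
    using common_eigenvector_in_invariant_subspace[OF alg_closed subspace_comod_component u(2,1)
        comod_component_X_G_invariant[OF \<open>YD_module n w \<gamma> X Xi G Y D\<close> \<open>n > 0\<close> h(2,1)]]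
    by blast
  have "\<alpha> \<noteq> 0" "\<beta> \<noteq> 0"
    using H_module_eigenvalues_nonzero[OF Hmod \<open>n > 0\<close> \<open>v \<noteq> 0\<close> eigen] by auto
  with v eigen h(1) show ?thesis
    unfolding standard_element_def comod_component_def by blast
qed

end
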